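(* Under the standing assumptions and definitions in the context, if $\mathbf{x}^r\in\Gamma$, then $\mathbf{x}^r\in\mathcal{F}(\mathbf{x}^r)$ and the interior of $\mathcal{F}(\mathbf{x}^r)$ is nonempty.
   Context: Problem: minimize $J(\mathbf{x})$ over $\mathbf{x}\in\Gamma\subset\mathbb{R}^n$, where (i) $J:\mathbb{R}^n\to\mathbb{R}^+$ is smooth and strictly convex; (ii) $\Gamma$ is connected and closed with piecewise smooth, non-self-intersecting boundary, and every point of $\Gamma$ lies in some $n$-dimensional convex polytope contained in $\Gamma$. Semi-convex decomposition: $\Gamma=\bigcap_{i=1}^N\Gamma_i$, $\Gamma_i=\{\mathbf{x}:\phi_i(\mathbf{x})\ge 0\}$, $\partial\Gamma_i=\{\mathbf{x}:\phi_i(\mathbf{x})=0\}$, where each $\phi_i:\mathbb{R}^n\to\mathbb{R}$ is continuous, piecewise smooth and semi-convex: there is a positive semidefinite $H_i^*$ such that $\mathbf{x}\mapsto\phi_i(\mathbf{x})+\frac12(\mathbf{x}-\mathbf{x}_0)^TH_i^*(\mathbf{x}-\mathbf{x}_0)$ is convex for every $\mathbf{x}_0$. One-sided directional derivative: $\partial_v\phi_i(\mathbf{x})=\lim_{a\to0^+}(\phi_i(\mathbf{x}+av)-\phi_i(\mathbf{x}))/a$. Sub-differential: $D\phi_i(\mathbf{x})=\{d\in\mathbb{R}^n: d\cdot v\le\partial_v\phi_i(\mathbf{x})\ \forall v\in\mathbb{R}^n\}$. It is assumed that: (1) $D\phi_i(\mathbf{x})\neq\{0\}$ for all $\mathbf{x}$;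 (2) $0\notin D\phi_i(\mathbf{x})$ if $\mathbf{x}\in\partial\Gamma_i$; (3) for any $\mathbf{x}$ with $I:=\{i:\phi_i(\mathbf{x})=0\}\ne\emptyset$ there is $v$ with $\partial_v\phi_i(\mathbf{x})<0$ for all $i\in I$. Optimal sub-gradients at a reference $\mathbf{x}^r$: a unit vector $v$ is a feasible search direction if for every $i$: $\phi_i(\mathbf{x}^r)>0$; or $\phi_i(\mathbf{x}^r)=0$ and some $d\in D\phi_i(\mathbf{x}^r)$ has $v\cdot d\ge0$; or $\phi_i(\mathbf{x}^r)<0$ and some $d\in D\phi_i(\mathbf{x}^r)$ has $v\cdot d>0$. Let $C(\mathbf{x}^r)$ be the set of these, and $v^*=\arg\min_{v\in C(\mathbf{x}^r)}\nabla J(\mathbf{x}^r)\cdot v$ (ties broken lexicographically). Let $DF_i=D\phi_i(\mathbf{x}^r)$ if $\phi_i(\mathbf{x}^r)>0$, $DF_i=\{d\in D\phi_i(\mathbf{x}^r):d\cdot v^*\ge0\}$ if $\phi_i(\mathbf{x}^r)=0$, $DF_i=\{d\in D\phi_i(\mathbf{x}^r):d\cdot v^*>0\}$ if $\phi_i(\mathbf{x}^r)<0$, and $\hat\nabla\phi_i(\mathbf{x}^r)=\arg\min_{d\in DF_i}\nabla J(\mathbf{x}^r)\cdot d/\|d\|$ (with $d/\|d\|:=0$ if $d=0$). Convex feasible set: $\mathcal{F}_i(\mathbf{x}^r)=\Gamma_i$ if $\phi_i$ is concave; $\mathcal{F}_i(\mathbf{x}^r)=\{\mathbf{x}:\phi_i(\mathbf{x}^r)+\hat\nabla\phi_i(\mathbf{x}^r)(\mathbf{x}-\mathbf{x}^r)\ge0\}$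 if $\phi_i$ is convex; $\mathcal{F}_i(\mathbf{x}^r)=\{\mathbf{x}:\phi_i(\mathbf{x}^r)+\hat\nabla\phi_i(\mathbf{x}^r)(\mathbf{x}-\mathbf{x}^r)\ge\frac12(\mathbf{x}-\mathbf{x}^r)^TH_i^*(\mathbf{x}-\mathbf{x}^r)\}$ otherwise; $\mathcal{F}(\mathbf{x}^r)=\bigcap_{i=1}^N\mathcal{F}_i(\mathbf{x}^r)$. *)

theory Defs
  imports "HOL-Analysis.Analysis"
begin

text \<open>Smooth (C-infinity) real functions: everywhere differentiable, and all
  directional derivatives are again smooth (greatest fixed point).\<close>
coinductive smooth_fun :: "('a::euclidean_space \<Rightarrow> real) \<Rightarrow> bool" where
  "\<lbrakk>continuous_on UNIV f; \<forall>x. f differentiable (at x);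
    \<forall>v. smooth_fun (\<lambda>x. frechet_derivative f (at x) v)\<rbrakk> \<Longrightarrow> smooth_fun f"

definition piecewise_smooth :: "('a::euclidean_space \<Rightarrow> real) \<Rightarrow> bool" where
  "piecewise_smooth f \<longleftrightarrow> continuous_on UNIV f \<and>
     (\<exists>G. finite G \<and> G \<noteq> {} \<and> (\<forall>g\<in>G. smooth_fun g) \<and> (\<forall>x. \<exists>g\<in>G. f x = g x))"

definition strictly_convex_on :: "'a::real_vector set \<Rightarrow> ('a \<Rightarrow> real) \<Rightarrow> bool" where
  "strictly_convex_on S f \<longleftrightarrow> convex S \<and> (\<forall>x\<in>S. \<forall>y\<in>S. \<forall>t::real. x \<noteq> y \<and> 0 < t \<and> t < 1 \<longrightarrow>
      f ((1 - t) *\<^sub>R x + t *\<^sub>R y) < (1 - t) * f x + t * f y)"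

definition psd :: "real^'n^'n \<Rightarrow> bool" where
  "psd H \<longleftrightarrow> transpose H = H \<and> (\<forall>y. 0 \<le> y \<bullet> (H *v y))"

definition semi_convex_wrt :: "(real^'n \<Rightarrow> real) \<Rightarrow> real^'n^'n \<Rightarrow> bool" where
  "semi_convex_wrt phi H \<longleftrightarrow> psd H \<and>
     (\<forall>x0. convex_on UNIV (\<lambda>x. phi x + 1/2 * ((x - x0) \<bullet> (H *v (x - x0)))))"

definition dir_deriv :: "('a::real_normed_vector \<Rightarrow> real) \<Rightarrow> 'a \<Rightarrow> 'a \<Rightarrow> real" where
  "dir_deriv phi x v = Lim (at_right (0::real)) (\<lambda>a. (phi (x + a *\<^sub>R v) - phi x) / a)"

definition subdiff :: "('a::real_inner \<Rightarrow> real) \<Rightarrow> 'a \<Rightarrow> 'a set" where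
  "subdiff phi x = {d. \<forall>v. d \<bullet> v \<le> dir_deriv phi x v}"

definition feas_dirs :: "(nat \<Rightarrow> 'a::real_inner \<Rightarrow> real) \<Rightarrow> nat \<Rightarrow> 'a \<Rightarrow> 'a set" where
  "feas_dirs phi N xr = {v. norm v = 1 \<and> (\<forall>i<N.
      0 < phi i xr
    \<or> (phi i xr = 0 \<and> (\<exists>d\<in>subdiff (phi i) xr. 0 \<le> v \<bullet> d))
    \<or> (phi i xr < 0 \<and> (\<exists>d\<in>subdiff (phi i) xr. 0 < v \<bullet> d)))}"

definition lex_less :: "real^('n::{finite,wellorder}) \<Rightarrow> real^('n::{finite,wellorder}) \<Rightarrow> bool" where
  "lex_less v w \<longleftrightarrow> (\<exists>k. v$k < w$k \<and> (\<forall>j<k. v$j = w$j))"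

definition is_opt_dir :: "(real^('n::{finite,wellorder}) \<Rightarrow> real) \<Rightarrow> (nat \<Rightarrow> real^('n::{finite,wellorder}) \<Rightarrow> real)
    \<Rightarrow> nat \<Rightarrow> real^('n::{finite,wellorder}) \<Rightarrow> real^('n::{finite,wellorder}) \<Rightarrow> bool" where
  "is_opt_dir J phi N xr vs \<longleftrightarrow> vs \<in> feas_dirs phi N xr \<and>
     (\<forall>v\<in>feas_dirs phi N xr. frechet_derivative J (at xr) vs \<le> frechet_derivative J (at xr) v) \<and>
     (\<forall>v\<in>feas_dirs phi N xr. frechet_derivative J (at xr) v = frechet_derivative J (at xr) vs
        \<longrightarrow> v = vs \<or> lex_less vs v)"

definition DF :: "(nat \<Rightarrow> 'a::real_inner \<Rightarrow> real) \<Rightarrow> nat \<Rightarrow> 'a \<Rightarrow> 'a \<Rightarrow> 'a set" where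
  "DF phi i xr vs =
     (if 0 < phi i xr then subdiff (phi i) xr
      else if phi i xr = 0 then {d\<in>subdiff (phi i) xr. 0 \<le> d \<bullet> vs}
      else {d\<in>subdiff (phi i) xr. 0 < d \<bullet> vs})"

definition unitize :: "'a::real_normed_vector \<Rightarrow> 'a" where
  "unitize d = (if d = 0 then 0 else d /\<^sub>R norm d)"

definition is_opt_subgrad :: "('a::real_inner \<Rightarrow> real) \<Rightarrow> (nat \<Rightarrow> 'a \<Rightarrow> real) \<Rightarrow> nat \<Rightarrow> 'a \<Rightarrow> 'a \<Rightarrow> 'a \<Rightarrow> bool"
  where "is_opt_subgrad J phi i xr vs g \<longleftrightarrow> g \<in> DF phi i xr vs \<and>
     (\<forall>d\<in>DF phi i xr vs. frechet_derivative J (at xr) (unitize g) \<le> frechet_derivative J (at xr) (unitize d))"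

definition F_i :: "(real^'n \<Rightarrow> real) \<Rightarrow> real^'n^'n \<Rightarrow> real^'n \<Rightarrow> real^'n \<Rightarrow> (real^'n) set" where
  "F_i phi H g xr =
     (if concave_on UNIV phi then {x. 0 \<le> phi x}
      else if convex_on UNIV phi then {x. 0 \<le> phi xr + g \<bullet> (x - xr)}
      else {x. 1/2 * ((x - xr) \<bullet> (H *v (x - xr))) \<le> phi xr + g \<bullet> (x - xr)})"

end

theory Submission
  imports Defs
begin

text \<open>Every point of \<open>\<Gamma>\<close> satisfies all constraints, hence lies in each
  \<open>\<F>\<^sub>i(x\<^sup>r)\<close>. For the interior, replace the non-strict inequalities defining \<open>\<F>\<^sub>i(x\<^sup>r)\<close>
  by strict ones: this gives open subsets of \<open>\<F>\<^sub>i(x\<^sup>r)\<close>, and short steps from \<open>x\<^sup>r\<close> in the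
  direction \<open>-v\<close>, with \<open>v\<close> the direction of assumption (3), enter all of them. For inactive
  constraints this is continuity; for an active one, \<open>\<partial>\<^sub>v\<phi>\<^sub>i(x\<^sup>r) < 0\<close> makes the linearisation
  with any sub-gradient increase along \<open>-v\<close>, and in the concave case semi-convexity makes
  \<open>\<phi>\<^sub>i\<close> itself increase along \<open>-v\<close>.\<close>

lemma convex_on_right_slope_convergent:
  fixes h :: "real \<Rightarrow> real"
  assumes cvx: "convex_on UNIV h"
  shows "\<exists>L. ((\<lambda>a. (h a - h 0) / a) \<longlongrightarrow> L) (at_right 0)"
proof -
  have mono: "(h a - h 0) / a \<le> (h b - h 0) / b" if "0 < a" "a \<le> b" for a b
  proof (cases "a = b")
    case False
    with that have "(h 0 - h a) / (0 - a) \<le> (h 0 - h b) / (0 - b)"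
      by (intro convex_on_slope_le(1)[OF cvx]) auto
    then show ?thesis by (simp add: divide_minus_right minus_divide_left)
  qed simp
  have bounded: "h 0 - h (-1) \<le> (h a - h 0) / a" if "0 < a" for a
  proof -
    have "(h (-1) - h 0) / (-1 - 0) \<le> (h (-1) - h a) / (-1 - a)"
      by (rule convex_on_slope_le(1)[OF cvx]) (use that in auto)
    also have "\<dots> \<le> (h 0 - h a) / (0 - a)"
      by (rule convex_on_slope_le(2)[OF cvx]) (use that in auto)
    finally show ?thesis by (simp add: divide_minus_right minus_divide_left)
  qed
  have "((\<lambda>a. (h a - h 0) / a) \<longlongrightarrow> Inf ((\<lambda>a. (h a - h 0) / a) ` ({0<..} \<inter> UNIV)))
          (at 0 within ({0<..} \<inter> UNIV))"
    by (rule Lim_right_bound[where K = "h 0 - h (-1)"]) (use mono bounded in auto)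
  then show ?thesis by auto
qed

lemma convex_on_line:
  fixes f :: "'a::real_vector \<Rightarrow> real"
  assumes "convex_on UNIV f"
  shows "convex_on UNIV (\<lambda>a::real. f (x + a *\<^sub>R v))"
proof (rule convex_onI)
  fix t a b :: real
  assume "0 < t" "t < 1"
  have "(1 - t) *\<^sub>R (x + a *\<^sub>R v) + t *\<^sub>R (x + b *\<^sub>R v) = x + ((1 - t) * a + t * b) *\<^sub>R v"
    by (simp add: algebra_simps)
  with convex_onD[OF assms, of t "x + a *\<^sub>R v" "x + b *\<^sub>R v"] \<open>0 < t\<close> \<open>t < 1\<close>
  show "f (x + ((1 - t) *\<^sub>R a + t *\<^sub>R b) *\<^sub>R v) \<le> (1 - t) * f (x + a *\<^sub>R v) + t * f (x + b *\<^sub>R v)"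
    by simp
qed simp

lemma semi_convex_convex_on_line:
  assumes "semi_convex_wrt phi H"
  shows "convex_on UNIV (\<lambda>a. phi (x + a *\<^sub>R v) + 1/2 * (a * a * (v \<bullet> (H *v v))))"
proof -
  have "convex_on UNIV (\<lambda>y. phi y + 1/2 * ((y - x) \<bullet> (H *v (y - x))))"
    using assms by (simp add: semi_convex_wrt_def)
  from convex_on_line[OF this, of x v] show ?thesis
    by (simp add: matrix_vector_mult_scaleR mult.assoc)
qed

text \<open>\<^const>\<open>dir_deriv\<close> is a \<^const>\<open>Lim\<close>, hence meaningless unless the one-sided
  limit exists; semi-convexity provides it, since adding the quadratic term makes the
  difference quotient monotone and bounded below.\<close>

lemma semi_convex_dir_deriv_tendsto:
  assumes "semi_convex_wrt phi H"
  shows "((\<lambda>a. (phi (x + a *\<^sub>R v) - phi x) / a) \<longlongrightarrow> dir_deriv phi x v) (at_right 0)"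
proof -
  define c where "c = v \<bullet> (H *v v)"
  define h where "h a = phi (x + a *\<^sub>R v) + 1/2 * (a * a * c)" for a
  obtain L where L: "((\<lambda>a. (h a - h 0) / a) \<longlongrightarrow> L) (at_right 0)"
    using convex_on_right_slope_convergent semi_convex_convex_on_line[OF assms]
    unfolding h_def c_def by blast
  have "\<forall>\<^sub>F a in at_right 0. (h a - h 0) / a - 1/2 * (a * c) = (phi (x + a *\<^sub>R v) - phi x) / a"
    using eventually_at_right_less[of "0::real"]
    by eventually_elim (simp add: h_def field_simps)
  moreover have "((\<lambda>a. (h a - h 0) / a - 1/2 * (a * c)) \<longlongrightarrow> L - 1/2 * (0 * c)) (at_right 0)"
    using L by (intro tendsto_intros)
  ultimately have "((\<lambda>a. (phi (x + a *\<^sub>R v) - phi x) / a) \<longlongrightarrow> L) (at_right 0)"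
    using tendsto_cong by fastforce
  moreover from this have "dir_deriv phi x v = L"
    unfolding dir_deriv_def by (simp add: tendsto_Lim trivial_limit_at_right_real)
  ultimately show ?thesis by simp
qed

lemma semi_convex_midpoint:
  assumes "semi_convex_wrt phi H"
  shows "2 * phi x \<le> phi (x + a *\<^sub>R v) + phi (x - a *\<^sub>R v) + a * a * (v \<bullet> (H *v v))"
proof -
  have "(1 - 1/2) *\<^sub>R (x + a *\<^sub>R v) + (1/2::real) *\<^sub>R (x + (- a) *\<^sub>R v) = x + (0::real) *\<^sub>R v"
    by (simp add: algebra_simps flip: scaleR_add_left)
  with convex_onD[OF semi_convex_convex_on_line[OF assms, of x v], of "1/2" a "- a"]
  show ?thesis by (simp add: field_simps)
qed

lemma semi_convex_increases_against_descent_dir: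
  assumes sc: "semi_convex_wrt phi H" and descent: "dir_deriv phi x v < 0"
  shows "\<forall>\<^sub>F t in at_right 0. phi x < phi (x - t *\<^sub>R v)"
proof -
  define L where "L = dir_deriv phi x v"
  define c where "c = v \<bullet> (H *v v)"
  have "L < L / 2" "0 * c < - L / 2"
    using descent by (simp_all add: L_def)
  have "\<forall>\<^sub>F t in at_right 0. (phi (x + t *\<^sub>R v) - phi x) / t < L / 2"
    by (rule order_tendstoD(2)[OF _ \<open>L < L / 2\<close>])
      (simp add: L_def semi_convex_dir_deriv_tendsto[OF sc])
  moreover have "\<forall>\<^sub>F t in at_right 0. t * c < - L / 2"
    by (rule order_tendstoD(2)[OF _ \<open>0 * c < - L / 2\<close>]) (intro tendsto_intros)
  ultimately show ?thesis
    using eventually_at_right_less[of "0::real"]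
  proof eventually_elim
    case (elim t)
    then have "phi (x + t *\<^sub>R v) < phi x + t * (L / 2)"
      by (simp add: divide_less_eq algebra_simps)
    moreover have "t * (t * c) < t * (- L / 2)"
      using elim by (intro mult_strict_left_mono) auto
    ultimately show ?case
      using semi_convex_midpoint[OF sc, of x t v] unfolding c_def by (simp add: algebra_simps)
  qed
qed

lemma eventually_quadratic_less_linear:
  fixes b c :: real
  assumes "0 < b"
  shows "\<forall>\<^sub>F t in at_right 0. 1/2 * (t * t * c) < t * b"
proof -
  have "\<forall>\<^sub>F t in at_right 0. t * c < 2 * b"
    using order_tendstoD(2)[OF tendsto_mult_left_zero[OF tendsto_ident_at, of c]] assms
    by simp
  then show ?thesis
    using eventually_at_right_less[of "0::real"]
    by eventually_elim (simp add: algebra_simps)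
qed

definition F_i_strict :: "(real^'n \<Rightarrow> real) \<Rightarrow> real^'n^'n \<Rightarrow> real^'n \<Rightarrow> real^'n \<Rightarrow> (real^'n) set" where
  "F_i_strict phi H g xr =
     (if concave_on UNIV phi then {x. 0 < phi x}
      else if convex_on UNIV phi then {x. 0 < phi xr + g \<bullet> (x - xr)}
      else {x. 1/2 * ((x - xr) \<bullet> (H *v (x - xr))) < phi xr + g \<bullet> (x - xr)})"

lemma F_i_strict_subset_F_i: "F_i_strict phi H g xr \<subseteq> F_i phi H g xr"
  unfolding F_i_strict_def F_i_def by auto

lemma open_F_i_strict:
  assumes "continuous_on UNIV phi"
  shows "open (F_i_strict phi H g xr)"
proof -
  have "continuous_on UNIV (\<lambda>x. (x - xr) \<bullet> (H *v (x - xr)))"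
    by (intro continuous_intros continuous_on_compose2[OF matrix_vector_mult_linear_continuous_on]) auto
  with assms show ?thesis
    unfolding F_i_strict_def by (auto intro!: open_Collect_less continuous_intros)
qed

lemma self_mem_F_i: "0 \<le> phi xr \<Longrightarrow> xr \<in> F_i phi H g xr"
  by (simp add: F_i_def)

lemma self_mem_F_i_strict: "0 < phi xr \<Longrightarrow> xr \<in> F_i_strict phi H g xr"
  by (simp add: F_i_strict_def)

lemma eventually_in_F_i_strict:
  assumes sc: "semi_convex_wrt phi H" and cont: "continuous_on UNIV phi"
    and nonneg: "0 \<le> phi xr" and subgrad: "g \<in> subdiff phi xr"
    and active_descent: "phi xr = 0 \<Longrightarrow> dir_deriv phi xr v < 0"
  shows "\<forall>\<^sub>F t in at_right 0. xr - t *\<^sub>R v \<in> F_i_strict phi H g xr"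
proof (cases "phi xr = 0")
  case False
  with nonneg have "xr \<in> F_i_strict phi H g xr"
    by (simp add: self_mem_F_i_strict)
  moreover have "((\<lambda>t. xr - t *\<^sub>R v) \<longlongrightarrow> xr - 0 *\<^sub>R v) (at_right 0)"
    by (intro tendsto_intros)
  ultimately show ?thesis
    using topological_tendstoD open_F_i_strict[OF cont] by fastforce
next
  case active: True
  with active_descent have descent: "dir_deriv phi xr v < 0" .
  have "g \<bullet> v \<le> dir_deriv phi xr v"
    using subgrad by (simp add: subdiff_def)
  with descent have ascent: "0 < g \<bullet> (- v)" by simp
  consider "concave_on UNIV phi" | "\<not> concave_on UNIV phi" "convex_on UNIV phi"
    | "\<not> concave_on UNIV phi" "\<not> convex_on UNIV phi" by blast
  then show ?thesis
  proof cases
    case 1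
    with semi_convex_increases_against_descent_dir[OF sc descent] active show ?thesis
      by (simp add: F_i_strict_def)
  next
    case 2
    from eventually_at_right_less[of "0::real"] show ?thesis
      by eventually_elim (use 2 active ascent in \<open>simp add: F_i_strict_def mult_pos_neg\<close>)
  next
    case 3
    from eventually_quadratic_less_linear[OF ascent, of "v \<bullet> (H *v v)"] show ?thesis
      by eventually_elim (use 3 active in \<open>simp add: F_i_strict_def matrix_vector_mult_scaleR flip: scaleR_minus_left\<close>)
  qed
qed

lemma DF_subset_subdiff: "DF phi i xr vs \<subseteq> subdiff (phi i) xr"
  by (auto simp: DF_def)

theorem lemma4p2:
  fixes J :: "real^('n::{finite,wellorder}) \<Rightarrow> real"
    and phi :: "nat \<Rightarrow> real^('n::{finite,wellorder}) \<Rightarrow> real"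
    and H :: "nat \<Rightarrow> real^('n::{finite,wellorder})^('n::{finite,wellorder})"
    and N :: nat
    and Gamma :: "(real^('n::{finite,wellorder})) set"
    and xr vs :: "real^('n::{finite,wellorder})"
    and g :: "nat \<Rightarrow> real^('n::{finite,wellorder})"
  assumes J_smooth: "smooth_fun J"
    and J_strict: "strictly_convex_on UNIV J"
    and J_nonneg: "\<forall>x. 0 \<le> J x"
    and Gamma_closed: "closed Gamma"
    and Gamma_connected: "connected Gamma"
    and Gamma_polytopes: "\<forall>x\<in>Gamma. \<exists>P. polytope P \<and> aff_dim P = int CARD('n) \<and> x \<in> P \<and> P \<subseteq> Gamma"
    and Gamma_decomp: "Gamma = (\<Inter>i<N. {x. 0 \<le> phi i x})"
    and bd: "\<forall>i<N. frontier {x. 0 \<le> phi i x} = {x. phi i x = 0}"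
    and phi_cont: "\<forall>i<N. continuous_on UNIV (phi i)"
    and phi_pws: "\<forall>i<N. piecewise_smooth (phi i)"
    and phi_semi: "\<forall>i<N. semi_convex_wrt (phi i) (H i)"
    and A1: "\<forall>i<N. \<forall>x. subdiff (phi i) x \<noteq> {0}"
    and A2: "\<forall>i<N. \<forall>x. phi i x = 0 \<longrightarrow> 0 \<notin> subdiff (phi i) x"
    and A3: "\<forall>x. {i. i < N \<and> phi i x = 0} \<noteq> {} \<longrightarrow>
               (\<exists>v. \<forall>i\<in>{i. i < N \<and> phi i x = 0}. dir_deriv (phi i) x v < 0)"
    and vs_opt: "is_opt_dir J phi N xr vs"
    and g_opt: "\<forall>i<N. is_opt_subgrad J phi i xr vs (g i)"
    and xr_in: "xr \<in> Gamma"
  shows "xr \<in> (\<Inter>i<N. F_i (phi i) (H i) (g i) xr)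
         \<and> interior (\<Inter>i<N. F_i (phi i) (H i) (g i) xr) \<noteq> {}"
proof -
  let ?F = "\<lambda>i. F_i (phi i) (H i) (g i) xr"
  let ?S = "\<lambda>i. F_i_strict (phi i) (H i) (g i) xr"
  have nonneg: "0 \<le> phi i xr" if "i < N" for i
    using xr_in that by (simp add: Gamma_decomp)
  obtain v where descent: "\<And>i. i < N \<Longrightarrow> phi i xr = 0 \<Longrightarrow> dir_deriv (phi i) xr v < 0"
  proof (cases "{i. i < N \<and> phi i xr = 0} = {}")
    case False
    with A3 that show ?thesis by blast
  qed blast
  have subgrad: "g i \<in> subdiff (phi i) xr" if "i < N" for i
    using g_opt DF_subset_subdiff that unfolding is_opt_subgrad_def by blast
  have "\<forall>\<^sub>F t in at_right 0. \<forall>i\<in>{..<N}. xr - t *\<^sub>R v \<in> ?S i"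
    using phi_semi phi_cont nonneg subgrad descent
    by (intro eventually_ball_finite ballI eventually_in_F_i_strict) auto
  then obtain t where t: "xr - t *\<^sub>R v \<in> (\<Inter>i<N. ?S i)"
    using eventually_happens trivial_limit_at_right_real by blast
  have "(\<Inter>i<N. ?S i) \<subseteq> interior (\<Inter>i<N. ?F i)"
  proof (rule interior_maximal)
    show "(\<Inter>i<N. ?S i) \<subseteq> (\<Inter>i<N. ?F i)"
      using F_i_strict_subset_F_i by blast
    show "open (\<Inter>i<N. ?S i)"
      using phi_cont by (auto intro!: open_INT open_F_i_strict)
  qed
  with t have "interior (\<Inter>i<N. ?F i) \<noteq> {}" by auto
  moreover have "xr \<in> (\<Inter>i<N. ?F i)"
    using nonneg by (simp add: self_mem_F_i)
  ultimately show ?thesis by simp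
qed

end
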